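(* For every TRS $\mathcal{R}$, $\to_\mathcal{R}^*\cdot\to_{\mathsf{CPS}(\mathcal{R})}\cdot\to_\mathcal{R}^* \;=\; \to_\mathcal{R}^*\cdot\to_{\mathsf{PCPS}(\mathcal{R})}\cdot\to_\mathcal{R}^*$; in particular $\mathsf{CPS}(\mathcal{R})/\mathcal{R}$ is terminating if and only if $\mathsf{PCPS}(\mathcal{R})/\mathcal{R}$ is terminating.
   Context: A TRS is a set of rules $\ell\to r$ ($\ell\notin\mathcal{V}$, $\mathcal{V}ar(r)\subseteq\mathcal{V}ar(\ell)$). $\mathcal{P}/\mathcal{R}$ terminating means $\to_\mathcal{R}^*\cdot\to_\mathcal{P}\cdot\to_\mathcal{R}^*$ admits no infinite chain. Critical peak of $\mathcal{R}$: for variants $\ell_1\to r_1,\ell_2\to r_2$ of $\mathcal{R}$-rules without common variables, a function-symbol position $p$ of $\ell_2$, a most general unifier $\sigma$ of $\ell_1$ and $\ell_2|_p$, with $\ell_1\to r_1$ not a variant of $\ell_2\to r_2$ if $p$ is the root: source $s=\ell_2\sigma$, results $t=(\ell_2\sigma)[r_1\sigma]_p$, $u=r_2\sigma$. Parallel critical peak of $\mathcal{R}$: for variants $\ell\to r$ and $\ell_p\to r_p$ ($p\in P$) of $\mathcal{R}$-rules, pairwise variable-disjoint, $P$ a non-empty set of pairwise parallel function-symbol positions of $\ell$, $\sigma$ an mgu of $\{\ell_p\approx\ell|_p\}_{p\in P}$, and $\ell_\epsilon\to r_\epsilon$ not a variant of $\ell\to r$ if $P=\{\epsilon\}$: source $s=\ell\sigma$,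 results $t=(\ell\sigma)[r_p\sigma]_{p\in P}$, $u=r\sigma$. $\mathsf{CPS}(\mathcal{R})=\{s\to t,s\to u\mid (t,s,u)$ a critical peak$\}$ and $\mathsf{PCPS}(\mathcal{R})=\{s\to t,s\to u\mid(t,s,u)$ a parallel critical peak$\}$. *)

theory Defs
  imports Main
begin

datatype ('f, 'v) "term" = Var 'v | Fun 'f "('f, 'v) term list"

type_synonym ('f, 'v) rule = "('f, 'v) term \<times> ('f, 'v) term"
type_synonym ('f, 'v) trs = "('f, 'v) rule set"
type_synonym pos = "nat list"

fun vars_term :: "('f, 'v) term \<Rightarrow> 'v set" where
  "vars_term (Var x) = {x}"
| "vars_term (Fun f ts) = (\<Union>t \<in> set ts. vars_term t)"

definition vars_rule :: "('f, 'v) rule \<Rightarrow> 'v set" where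
  "vars_rule rl = vars_term (fst rl) \<union> vars_term (snd rl)"

fun subst_apply :: "('f, 'v) term \<Rightarrow> ('v \<Rightarrow> ('f, 'v) term) \<Rightarrow> ('f, 'v) term" where
  "subst_apply (Var x) \<sigma> = \<sigma> x"
| "subst_apply (Fun f ts) \<sigma> = Fun f (map (\<lambda>t. subst_apply t \<sigma>) ts)"

text \<open>Positions of a term (Dewey notation, 0-based argument indices).\<close>
fun is_pos :: "('f, 'v) term \<Rightarrow> pos \<Rightarrow> bool" where
  "is_pos t [] = True"
| "is_pos (Var x) (i # p) = False"
| "is_pos (Fun f ts) (i # p) = (i < length ts \<and> is_pos (ts ! i) p)"

fun subt_at :: "('f, 'v) term \<Rightarrow> pos \<Rightarrow> ('f, 'v) term" where
  "subt_at t [] = t"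
| "subt_at (Var x) (i # p) = Var x"
| "subt_at (Fun f ts) (i # p) = subt_at (ts ! i) p"

fun replace_at :: "('f, 'v) term \<Rightarrow> pos \<Rightarrow> ('f, 'v) term \<Rightarrow> ('f, 'v) term" where
  "replace_at t [] s = s"
| "replace_at (Var x) (i # p) s = Var x"
| "replace_at (Fun f ts) (i # p) s = Fun f (ts[i := replace_at (ts ! i) p s])"

definition is_Var_term :: "('f, 'v) term \<Rightarrow> bool" where
  "is_Var_term t = (\<exists>x. t = Var x)"

definition fun_poss :: "('f, 'v) term \<Rightarrow> pos set" where
  "fun_poss t = {p. is_pos t p \<and> \<not> is_Var_term (subt_at t p)}"

definition parallel_pos :: "pos \<Rightarrow> pos \<Rightarrow> bool" where
  "parallel_pos p q = ((\<nexists>r. q = p @ r) \<and> (\<nexists>r. p = q @ r))"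

definition wf_trs :: "('f, 'v) trs \<Rightarrow> bool" where
  "wf_trs R = (\<forall>(l, r) \<in> R. \<not> is_Var_term l \<and> vars_term r \<subseteq> vars_term l)"

definition rstep :: "('f, 'v) trs \<Rightarrow> ('f, 'v) term rel" where
  "rstep R = {(s, t). \<exists>l r p \<sigma>. (l, r) \<in> R \<and> is_pos s p \<and>
      subt_at s p = subst_apply l \<sigma> \<and> t = replace_at s p (subst_apply r \<sigma>)}"

definition relstep :: "('f, 'v) trs \<Rightarrow> ('f, 'v) trs \<Rightarrow> ('f, 'v) term rel" where
  "relstep P R = (rstep R)\<^sup>* O rstep P O (rstep R)\<^sup>*"

definition SN_rel :: "'a rel \<Rightarrow> bool" where
  "SN_rel S = (\<nexists>f. \<forall>i. (f i, f (Suc i)) \<in> S)"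

definition rel_terminating :: "('f, 'v) trs \<Rightarrow> ('f, 'v) trs \<Rightarrow> bool" where
  "rel_terminating P R = SN_rel (relstep P R)"

definition is_variant :: "('f, 'v) rule \<Rightarrow> ('f, 'v) rule \<Rightarrow> bool" where
  "is_variant rl' rl = (\<exists>\<pi>. bij \<pi> \<and> fst rl' = subst_apply (fst rl) (Var \<circ> \<pi>)
                              \<and> snd rl' = subst_apply (snd rl) (Var \<circ> \<pi>))"

definition variant_of :: "('f, 'v) trs \<Rightarrow> ('f, 'v) rule \<Rightarrow> bool" where
  "variant_of R rl' = (\<exists>rl \<in> R. is_variant rl' rl)"

definition is_unifier :: "('v \<Rightarrow> ('f, 'v) term) \<Rightarrow> (('f, 'v) term \<times> ('f, 'v) term) set \<Rightarrow> bool" where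
  "is_unifier \<sigma> E = (\<forall>(s, t) \<in> E. subst_apply s \<sigma> = subst_apply t \<sigma>)"

definition is_mgu :: "('v \<Rightarrow> ('f, 'v) term) \<Rightarrow> (('f, 'v) term \<times> ('f, 'v) term) set \<Rightarrow> bool" where
  "is_mgu \<sigma> E = (is_unifier \<sigma> E \<and>
     (\<forall>\<tau>. is_unifier \<tau> E \<longrightarrow> (\<exists>\<delta>. \<forall>x. \<tau> x = subst_apply (\<sigma> x) \<delta>)))"

definition critical_peak :: "('f, 'v) trs \<Rightarrow> ('f, 'v) term \<Rightarrow> ('f, 'v) term \<Rightarrow> ('f, 'v) term \<Rightarrow> bool" where
  "critical_peak R t s u = (\<exists>l1 r1 l2 r2 p \<sigma>.
      variant_of R (l1, r1) \<and> variant_of R (l2, r2) \<and>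
      vars_rule (l1, r1) \<inter> vars_rule (l2, r2) = {} \<and>
      p \<in> fun_poss l2 \<and> is_mgu \<sigma> {(l1, subt_at l2 p)} \<and>
      (p = [] \<longrightarrow> \<not> is_variant (l1, r1) (l2, r2)) \<and>
      s = subst_apply l2 \<sigma> \<and>
      t = replace_at (subst_apply l2 \<sigma>) p (subst_apply r1 \<sigma>) \<and>
      u = subst_apply r2 \<sigma>)"

text \<open>The rules \<open>\<ell>\<^sub>p \<rightarrow> r\<^sub>p\<close> are given by the family \<open>rl p\<close>; the parallel replacement
  \<open>(\<ell>\<sigma>)[r\<^sub>p\<sigma>]\<^sub>p\<^sub>\<in>\<^sub>P\<close> is computed by successive replacement along an enumeration of P
  (independent of the enumeration since positions in P are pairwise parallel).\<close>
definition parallel_critical_peak :: "('f, 'v) trs \<Rightarrow> ('f, 'v) term \<Rightarrow> ('f, 'v) term \<Rightarrow> ('f, 'v) term \<Rightarrow> bool" where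
  "parallel_critical_peak R t s u = (\<exists>l r P rl \<sigma> ps.
      variant_of R (l, r) \<and> (\<forall>p \<in> P. variant_of R (rl p)) \<and>
      (\<forall>p \<in> P. vars_rule (rl p) \<inter> vars_rule (l, r) = {}) \<and>
      (\<forall>p \<in> P. \<forall>q \<in> P. p \<noteq> q \<longrightarrow> vars_rule (rl p) \<inter> vars_rule (rl q) = {}) \<and>
      P \<noteq> {} \<and> P \<subseteq> fun_poss l \<and>
      (\<forall>p \<in> P. \<forall>q \<in> P. p \<noteq> q \<longrightarrow> parallel_pos p q) \<and>
      is_mgu \<sigma> {(fst (rl p), subt_at l p) | p. p \<in> P} \<and>
      (P = {[]} \<longrightarrow> \<not> is_variant (rl []) (l, r)) \<and>
      set ps = P \<and> distinct ps \<and>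
      s = subst_apply l \<sigma> \<and>
      t = foldr (\<lambda>p v. replace_at v p (subst_apply (snd (rl p)) \<sigma>)) ps (subst_apply l \<sigma>) \<and>
      u = subst_apply r \<sigma>)"

definition CPS :: "('f, 'v) trs \<Rightarrow> ('f, 'v) trs" where
  "CPS R = {(s, t). \<exists>u. critical_peak R t s u} \<union> {(s, u). \<exists>t. critical_peak R t s u}"

definition PCPS :: "('f, 'v) trs \<Rightarrow> ('f, 'v) trs" where
  "PCPS R = {(s, t). \<exists>u. parallel_critical_peak R t s u} \<union> {(s, u). \<exists>t. parallel_critical_peak R t s u}"

end

theory Submission
  imports Defs
begin

text \<open>
  A critical peak is a parallel critical peak with a single position, so \<open>CPS R \<subseteq> PCPS R\<close>.
  Conversely, let \<open>(t, s, u)\<close> be a parallel critical peak with positions \<open>P\<close> and mgu \<open>\<sigma>\<close>,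
  and pick \<open>p \<in> P\<close>. Since \<open>\<sigma>\<close> unifies \<open>\<ell>\<^sub>p\<close> with \<open>\<ell>|\<^sub>p\<close>, it factors as \<open>\<mu>\<delta>\<close> through an mgu \<open>\<mu>\<close>
  of that single overlap, and the critical peak built from \<open>\<mu>\<close> has \<open>s \<rightarrow> u\<close> and
  \<open>s \<rightarrow> (\<ell>\<sigma>)[r\<^sub>p\<sigma>]\<^sub>p\<close> as \<open>\<delta>\<close>-instances of \<open>CPS\<close>-rules. The remaining positions of \<open>P\<close> are
  parallel to \<open>p\<close>, so contracting their redexes leads from there to \<open>t\<close> by \<open>R\<close>-steps. Hence every
  \<open>PCPS\<close>-step is a \<open>CPS\<close>-step followed by \<open>R\<close>-steps, and the two relative rewrite relations
  coincide.
\<close>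

section \<open>Substitutions\<close>

definition subst_comp :: "('v \<Rightarrow> ('f, 'v) term) \<Rightarrow> ('v \<Rightarrow> ('f, 'v) term) \<Rightarrow> 'v \<Rightarrow> ('f, 'v) term"
    (infixl \<open>\<circ>\<^sub>s\<close> 75) where
  "\<sigma> \<circ>\<^sub>s \<tau> = (\<lambda>x. subst_apply (\<sigma> x) \<tau>)"

lemma subst_apply_subst_apply [simp]:
  "subst_apply (subst_apply t \<sigma>) \<tau> = subst_apply t (\<sigma> \<circ>\<^sub>s \<tau>)"
  by (induct t) (auto simp: subst_comp_def)

lemma subst_comp_assoc: "\<sigma> \<circ>\<^sub>s \<theta> \<circ>\<^sub>s \<delta> = \<sigma> \<circ>\<^sub>s (\<theta> \<circ>\<^sub>s \<delta>)"
  by (simp add: subst_comp_def)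

lemma subst_apply_Var [simp]: "subst_apply t Var = t"
  by (induct t) (auto simp: map_idI)

lemma subst_apply_cong:
  "(\<And>x. x \<in> vars_term t \<Longrightarrow> \<sigma> x = \<tau> x) \<Longrightarrow> subst_apply t \<sigma> = subst_apply t \<tau>"
  by (induct t) auto

lemma vars_term_subst_apply:
  "vars_term (subst_apply t \<sigma>) = (\<Union>x \<in> vars_term t. vars_term (\<sigma> x))"
  by (induct t) auto

lemma finite_vars_term [simp]: "finite (vars_term t)"
  by (induct t) auto

lemma size_subst_apply_ge: "x \<in> vars_term t \<Longrightarrow> size (\<sigma> x) \<le> size (subst_apply t \<sigma>)"
proof (induct t)
  case (Fun f ts)
  then obtain u where u: "u \<in> set ts" "x \<in> vars_term u" by auto
  then have "size (\<sigma> x) \<le> size (subst_apply u \<sigma>)" using Fun by simp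
  then show ?case using u(1) by (simp add: size_list_estimation' le_SucI)
qed simp

lemma size_subst_apply_gt:
  assumes "x \<in> vars_term t" and "t \<noteq> Var x"
  shows "size (\<sigma> x) < size (subst_apply t \<sigma>)"
proof (cases t)
  case (Fun f ts)
  with assms obtain u where u: "u \<in> set ts" "x \<in> vars_term u" by auto
  from u(2) have "size (\<sigma> x) \<le> size (subst_apply u \<sigma>)" by (rule size_subst_apply_ge)
  then show ?thesis using Fun u(1) by (simp add: size_list_estimation' le_imp_less_Suc)
qed (use assms in auto)

section \<open>Most general unifiers\<close>

type_synonym ('f, 'v) eqs = "(('f, 'v) term \<times> ('f, 'v) term) list"

definition vars_eqs :: "('f, 'v) eqs \<Rightarrow> 'v set" where
  "vars_eqs E = (\<Union>(s, t) \<in> set E. vars_term s \<union> vars_term t)"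

definition size_eqs :: "('f, 'v) eqs \<Rightarrow> nat" where
  "size_eqs E = size_list (\<lambda>(s, t). size s + size t) E"

definition subst_eqs :: "('v \<Rightarrow> ('f, 'v) term) \<Rightarrow> ('f, 'v) eqs \<Rightarrow> ('f, 'v) eqs" where
  "subst_eqs \<sigma> E = map (\<lambda>(s, t). (subst_apply s \<sigma>, subst_apply t \<sigma>)) E"

text \<open>Termination order of the Martelli--Montanari unification algorithm: eliminating a
  variable decreases the number of variables, deleting or decomposing an equation the size.\<close>

definition unif_order :: "(('f, 'v) eqs \<times> ('f, 'v) eqs) set" where
  "unif_order = measures [\<lambda>E. card (vars_eqs E), size_eqs]"

lemma wf_unif_order: "wf unif_order"
  by (simp add: unif_order_def)

lemma finite_vars_eqs [simp]: "finite (vars_eqs E)"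
  by (auto simp: vars_eqs_def)

lemma unif_order_swap: "(E', (t, s) # E) \<in> unif_order \<longleftrightarrow> (E', (s, t) # E) \<in> unif_order"
  by (simp add: unif_order_def vars_eqs_def size_eqs_def Un_commute add.commute)

lemma is_unifier_empty [simp]: "is_unifier \<tau> {}"
  by (simp add: is_unifier_def)

lemma is_unifier_insert [simp]:
  "is_unifier \<tau> (insert (s, t) E) \<longleftrightarrow> subst_apply s \<tau> = subst_apply t \<tau> \<and> is_unifier \<tau> E"
  by (simp add: is_unifier_def)

lemma is_unifier_subst_eqs:
  "is_unifier \<tau> (set (subst_eqs \<sigma> E)) \<longleftrightarrow> is_unifier (\<sigma> \<circ>\<^sub>s \<tau>) (set E)"
  by (auto simp: is_unifier_def subst_eqs_def)

lemma is_mgu_iff: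
  "is_mgu \<sigma> E \<longleftrightarrow> is_unifier \<sigma> E \<and> (\<forall>\<tau>. is_unifier \<tau> E \<longrightarrow> (\<exists>\<delta>. \<tau> = \<sigma> \<circ>\<^sub>s \<delta>))"
  by (simp add: is_mgu_def subst_comp_def fun_eq_iff)

lemma is_mgu_cong: "(\<And>\<tau>. is_unifier \<tau> E \<longleftrightarrow> is_unifier \<tau> E') \<Longrightarrow> is_mgu \<sigma> E \<longleftrightarrow> is_mgu \<sigma> E'"
  by (simp add: is_mgu_def)

lemma Var_subst_comp [simp]: "Var \<circ>\<^sub>s \<tau> = \<tau>"
  by (simp add: subst_comp_def)

lemma Var_upd_subst_comp: "\<tau> x = subst_apply t \<tau> \<Longrightarrow> Var(x := t) \<circ>\<^sub>s \<tau> = \<tau>"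
  by (auto simp: subst_comp_def)

lemma is_unifier_Var_elim:
  "is_unifier \<tau> (set ((Var x, t) # E)) \<longleftrightarrow>
     \<tau> x = subst_apply t \<tau> \<and> is_unifier \<tau> (set (subst_eqs (Var(x := t)) E))"
  by (auto simp: is_unifier_subst_eqs Var_upd_subst_comp)

lemma is_mgu_Var_elim:
  assumes "x \<notin> vars_term t" and mgu: "is_mgu \<theta> (set (subst_eqs (Var(x := t)) E))"
  shows "is_mgu (Var(x := t) \<circ>\<^sub>s \<theta>) (set ((Var x, t) # E))"
  unfolding is_mgu_iff
proof (intro conjI allI impI)
  have "subst_apply t (Var(x := t)) = subst_apply t Var"
    by (rule subst_apply_cong) (use assms(1) in auto)
  then have "subst_apply t (Var(x := t) \<circ>\<^sub>s \<theta>) = subst_apply t \<theta>"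
    by (metis subst_apply_subst_apply subst_apply_Var)
  moreover have "(Var(x := t) \<circ>\<^sub>s \<theta>) x = subst_apply t \<theta>"
    by (simp add: subst_comp_def)
  ultimately show "is_unifier (Var(x := t) \<circ>\<^sub>s \<theta>) (set ((Var x, t) # E))"
    using mgu by (simp add: is_mgu_def is_unifier_subst_eqs)
next
  fix \<tau> assume "is_unifier \<tau> (set ((Var x, t) # E))"
  then have "\<tau> x = subst_apply t \<tau>" and "is_unifier \<tau> (set (subst_eqs (Var(x := t)) E))"
    by (simp_all only: is_unifier_Var_elim)
  moreover obtain \<delta> where "\<tau> = \<theta> \<circ>\<^sub>s \<delta>"
    using mgu calculation(2) by (auto simp: is_mgu_iff)
  ultimately show "\<exists>\<delta>. \<tau> = Var(x := t) \<circ>\<^sub>s \<theta> \<circ>\<^sub>s \<delta>"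
    by (metis Var_upd_subst_comp subst_comp_assoc)
qed

lemma vars_eqs_Var_elim:
  "x \<notin> vars_term t \<Longrightarrow> vars_eqs (subst_eqs (Var(x := t)) E) \<subset> vars_eqs ((Var x, t) # E)"
  by (fastforce simp: vars_eqs_def subst_eqs_def vars_term_subst_apply split: if_splits)

lemma is_unifier_decompose:
  "is_unifier \<tau> (set ((Fun f ss, Fun g ts) # E)) \<longleftrightarrow>
     f = g \<and> length ss = length ts \<and> is_unifier \<tau> (set (zip ss ts @ E))"
  by (auto simp: is_unifier_def list_eq_iff_zip_eq[of "map _ ss"] zip_map_map
      dest: map_eq_imp_length_eq)


lemma size_eqs_zip:
  "length ss = length ts \<Longrightarrow> size_eqs (zip ss ts) \<le> size_list size ss + size_list size ts"
  by (induct ss ts rule: list_induct2) (auto simp: size_eqs_def)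

lemma unif_order_decompose:
  assumes "length ss = length ts"
  shows "(zip ss ts @ E, (Fun f ss, Fun g ts) # E) \<in> unif_order"
proof -
  have "vars_eqs (zip ss ts @ E) \<subseteq> vars_eqs ((Fun f ss, Fun g ts) # E)"
    by (auto simp: vars_eqs_def dest: set_zip_leftD set_zip_rightD)
  then have "card (vars_eqs (zip ss ts @ E)) \<le> card (vars_eqs ((Fun f ss, Fun g ts) # E))"
    by (simp add: card_mono)
  moreover have "size_eqs (zip ss ts @ E) < size_eqs ((Fun f ss, Fun g ts) # E)"
    using size_eqs_zip[OF assms] by (simp add: size_eqs_def)
  ultimately show ?thesis by (auto simp: unif_order_def)
qed

lemma unifiable_Var_eq_imp_mgu:
  assumes unif: "is_unifier \<tau> (set ((Var x, t) # E))"
    and IH: "\<And>E' \<tau>'. (E', (Var x, t) # E) \<in> unif_order \<Longrightarrow> is_unifier \<tau>' (set E') \<Longrightarrow>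
      \<exists>\<sigma>. is_mgu \<sigma> (set E')"
  shows "\<exists>\<sigma>. is_mgu \<sigma> (set ((Var x, t) # E))"
proof (cases "t = Var x")
  case True
  have "vars_eqs E \<subseteq> vars_eqs ((Var x, t) # E)"
    by (auto simp: vars_eqs_def)
  then have "card (vars_eqs E) \<le> card (vars_eqs ((Var x, t) # E))"
    by (simp add: card_mono)
  then have "(E, (Var x, t) # E) \<in> unif_order"
    by (auto simp: unif_order_def size_eqs_def)
  moreover have "is_unifier \<tau> (set E)" using unif by simp
  ultimately obtain \<sigma> where "is_mgu \<sigma> (set E)" by (metis IH)
  moreover have "is_mgu \<sigma> (set ((Var x, t) # E)) \<longleftrightarrow> is_mgu \<sigma> (set E)"
    by (rule is_mgu_cong) (simp add: True)
  ultimately show ?thesis by blast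
next
  case False
  from unif have "subst_apply t \<tau> = \<tau> x" by simp
  then have occurs: "x \<notin> vars_term t"
    using size_subst_apply_gt[OF _ False, of \<tau>] by auto
  then have "card (vars_eqs (subst_eqs (Var(x := t)) E)) < card (vars_eqs ((Var x, t) # E))"
    by (simp add: vars_eqs_Var_elim psubset_card_mono)
  then have "(subst_eqs (Var(x := t)) E, (Var x, t) # E) \<in> unif_order"
    by (simp add: unif_order_def)
  moreover have "is_unifier \<tau> (set (subst_eqs (Var(x := t)) E))"
    using unif unfolding is_unifier_Var_elim by blast
  ultimately obtain \<theta> where "is_mgu \<theta> (set (subst_eqs (Var(x := t)) E))"
    by (metis IH)
  with occurs show ?thesis by (blast intro: is_mgu_Var_elim)
qed

lemma unifiable_imp_mgu: "is_unifier \<tau> (set E) \<Longrightarrow> \<exists>\<sigma>. is_mgu \<sigma> (set E)"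
  using wf_unif_order
proof (induction E arbitrary: \<tau> rule: wf_induct_rule)
  case (less E)
  consider "E = []"
    | x t E' where "E = (Var x, t) # E'"
    | f ss x E' where "E = (Fun f ss, Var x) # E'"
    | f ss g ts E' where "E = (Fun f ss, Fun g ts) # E'"
    by (metis list.exhaust prod.exhaust term.exhaust)
  then show ?case
  proof cases
    case 1
    then have "is_mgu Var (set E)" by (simp add: is_mgu_iff)
    then show ?thesis by blast
  next
    case (2 x t E')
    show ?thesis unfolding 2
    proof (rule unifiable_Var_eq_imp_mgu)
      show "is_unifier \<tau> (set ((Var x, t) # E'))" using less.prems by (simp only: 2)
    qed (fact less.IH[unfolded 2])
  next
    case (3 f ss x E')
    have "\<exists>\<sigma>. is_mgu \<sigma> (set ((Var x, Fun f ss) # E'))"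
    proof (rule unifiable_Var_eq_imp_mgu)
      show "is_unifier \<tau> (set ((Var x, Fun f ss) # E'))" using less.prems by (auto simp: 3)
    next
      fix E'' \<tau>'
      assume "(E'', (Var x, Fun f ss) # E') \<in> unif_order" and "is_unifier \<tau>' (set E'')"
      then show "\<exists>\<sigma>. is_mgu \<sigma> (set E'')"
        by (intro less.IH) (simp_all add: 3 unif_order_swap)
    qed
    moreover have "is_mgu \<sigma> (set ((Var x, Fun f ss) # E')) \<longleftrightarrow> is_mgu \<sigma> (set E)" for \<sigma>
      by (rule is_mgu_cong) (auto simp: 3)
    ultimately show ?thesis by blast
  next
    case (4 f ss g ts E')
    from less.prems have "length ss = length ts" and "is_unifier \<tau> (set (zip ss ts @ E'))"
      unfolding 4 is_unifier_decompose by blast+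
    then obtain \<sigma> where "is_mgu \<sigma> (set (zip ss ts @ E'))"
      using less.IH unif_order_decompose unfolding 4 by metis
    moreover have "is_unifier \<tau>' (set (zip ss ts @ E')) \<longleftrightarrow> is_unifier \<tau>' (set E)" for \<tau>'
      using less.prems unfolding 4 is_unifier_decompose by blast
    then have "is_mgu \<sigma> (set (zip ss ts @ E')) \<longleftrightarrow> is_mgu \<sigma> (set E)"
      by (rule is_mgu_cong)
    ultimately show ?thesis by blast
  qed
qed

corollary unifier_imp_mgu: "is_unifier \<tau> {(s, t)} \<Longrightarrow> \<exists>\<sigma>. is_mgu \<sigma> {(s, t)}"
  using unifiable_imp_mgu[of \<tau> "[(s, t)]"] by simp

section \<open>Positions and rewrite steps\<close>

lemma is_pos_subst_apply: "is_pos t p \<Longrightarrow> is_pos (subst_apply t \<sigma>) p"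
  by (induct t p rule: is_pos.induct) auto

lemma subt_at_subst_apply: "is_pos t p \<Longrightarrow> subt_at (subst_apply t \<sigma>) p = subst_apply (subt_at t p) \<sigma>"
  by (induct t p rule: is_pos.induct) auto

lemma subst_apply_replace_at:
  "is_pos t p \<Longrightarrow> subst_apply (replace_at t p s) \<sigma> = replace_at (subst_apply t \<sigma>) p (subst_apply s \<sigma>)"
  by (induct t p rule: is_pos.induct) (auto simp: map_update)

lemma is_pos_replace_at: "is_pos t p \<Longrightarrow> is_pos (replace_at t p s) p"
  by (induct t p rule: is_pos.induct) auto

lemma subt_at_replace_at: "is_pos t p \<Longrightarrow> subt_at (replace_at t p s) p = s"
  by (induct t p rule: is_pos.induct) auto

lemma replace_at_replace_at: "is_pos t p \<Longrightarrow> replace_at (replace_at t p s) p s' = replace_at t p s'"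
  by (induct t p rule: is_pos.induct) auto

lemma replace_at_subt_at: "is_pos t p \<Longrightarrow> replace_at t p (subt_at t p) = t"
  by (induct t p rule: is_pos.induct) auto

lemma is_pos_append: "is_pos t q \<Longrightarrow> is_pos (subt_at t q) p \<Longrightarrow> is_pos t (q @ p)"
  by (induct t q rule: is_pos.induct) auto

lemma subt_at_append: "is_pos t q \<Longrightarrow> subt_at t (q @ p) = subt_at (subt_at t q) p"
  by (induct t q rule: is_pos.induct) auto

lemma replace_at_append:
  "is_pos t q \<Longrightarrow> replace_at t (q @ p) s = replace_at t q (replace_at (subt_at t q) p s)"
  by (induct t q rule: is_pos.induct) auto

lemma parallel_pos_replace_at:
  assumes "parallel_pos p q" and "is_pos t q"
  shows "is_pos (replace_at t p s) q \<and> subt_at (replace_at t p s) q = subt_at t q"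
  using assms
proof (induct t q arbitrary: p rule: is_pos.induct)
  case (3 f ts j q)
  then obtain i p' where p: "p = i # p'" by (cases p) (auto simp: parallel_pos_def)
  show ?case
  proof (cases "i = j")
    case True
    with 3 p have "parallel_pos p' q" by (auto simp: parallel_pos_def)
    with 3 p True show ?thesis by auto
  qed (use 3 p in auto)
qed (auto simp: parallel_pos_def)

lemma rstep_rule_instance: "(l, r) \<in> S \<Longrightarrow> (subst_apply l \<sigma>, subst_apply r \<sigma>) \<in> rstep S"
  unfolding rstep_def
  by (intro CollectI case_prodI exI[of _ l] exI[of _ r] exI[of _ "[]"] exI[of _ \<sigma>] conjI) simp_all

lemma rstep_replace_at_subst:
  assumes "(s, t) \<in> rstep S" and w: "is_pos w q" "subt_at w q = subst_apply s \<sigma>"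
  shows "(w, replace_at w q (subst_apply t \<sigma>)) \<in> rstep S"
proof -
  from assms(1) obtain l r p \<rho> where lr: "(l, r) \<in> S" and p: "is_pos s p"
    and s: "subt_at s p = subst_apply l \<rho>" and t: "t = replace_at s p (subst_apply r \<rho>)"
    unfolding rstep_def by blast
  have "is_pos (subt_at w q) p" using w p by (simp add: is_pos_subst_apply)
  with w(1) have "is_pos w (q @ p)" by (rule is_pos_append)
  moreover have "subt_at w (q @ p) = subst_apply l (\<rho> \<circ>\<^sub>s \<sigma>)"
    using w p s by (simp add: subt_at_append subt_at_subst_apply)
  moreover have "replace_at w q (subst_apply t \<sigma>) = replace_at w (q @ p) (subst_apply r (\<rho> \<circ>\<^sub>s \<sigma>))"
    using w p t by (simp add: replace_at_append subst_apply_replace_at)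
  ultimately show ?thesis using lr unfolding rstep_def by blast
qed

corollary rstep_replace_at:
  "(s, t) \<in> rstep S \<Longrightarrow> is_pos w q \<Longrightarrow> subt_at w q = s \<Longrightarrow> (w, replace_at w q t) \<in> rstep S"
  using rstep_replace_at_subst[where \<sigma> = Var] by simp

lemma rsteps_replace_at_subst:
  assumes "(s, t) \<in> (rstep S)\<^sup>*" and "is_pos w q" "subt_at w q = subst_apply s \<sigma>"
  shows "(w, replace_at w q (subst_apply t \<sigma>)) \<in> (rstep S)\<^sup>*"
  using assms(1)
proof (induct rule: rtrancl_induct)
  case base
  show ?case using assms(2,3) by (metis rtrancl.rtrancl_refl replace_at_subt_at)
next
  case (step t t')
  let ?w = "replace_at w q (subst_apply t \<sigma>)"
  have "(?w, replace_at ?w q (subst_apply t' \<sigma>)) \<in> rstep S"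
    using step(2) assms(2)
    by (intro rstep_replace_at_subst) (simp_all add: is_pos_replace_at subt_at_replace_at)
  with step(3) assms(2) show ?case by (simp add: replace_at_replace_at)
qed

lemma rstep_subset_rstep_O_rsteps:
  assumes "\<And>s t. (s, t) \<in> P \<Longrightarrow> (s, t) \<in> rstep Q O (rstep R)\<^sup>*"
  shows "rstep P \<subseteq> rstep Q O (rstep R)\<^sup>*"
proof clarify
  fix w w' assume "(w, w') \<in> rstep P"
  then obtain s t q \<sigma> where st: "(s, t) \<in> P" and w: "is_pos w q" "subt_at w q = subst_apply s \<sigma>"
    and w': "w' = replace_at w q (subst_apply t \<sigma>)"
    unfolding rstep_def by blast
  from assms[OF st] obtain v where "(s, v) \<in> rstep Q" "(v, t) \<in> (rstep R)\<^sup>*" by blast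
  let ?w = "replace_at w q (subst_apply v \<sigma>)"
  have "(w, ?w) \<in> rstep Q"
    using \<open>(s, v) \<in> rstep Q\<close> w by (rule rstep_replace_at_subst)
  moreover have "(?w, replace_at ?w q (subst_apply t \<sigma>)) \<in> (rstep R)\<^sup>*"
    using \<open>(v, t) \<in> (rstep R)\<^sup>*\<close> w(1)
    by (intro rsteps_replace_at_subst) (simp_all add: is_pos_replace_at subt_at_replace_at)
  ultimately show "(w, w') \<in> rstep Q O (rstep R)\<^sup>*"
    using w(1) w' by (auto simp: replace_at_replace_at)
qed

lemma rstep_mono: "S \<subseteq> T \<Longrightarrow> rstep S \<subseteq> rstep T"
  unfolding rstep_def by blast

lemma relstep_eqI:
  assumes "rstep P \<subseteq> rstep Q" and "rstep Q \<subseteq> rstep P O (rstep R)\<^sup>*"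
  shows "relstep P R = relstep Q R"
proof
  show "relstep P R \<subseteq> relstep Q R"
    unfolding relstep_def using assms(1) by blast
  have "relstep Q R \<subseteq> (rstep R)\<^sup>* O rstep P O ((rstep R)\<^sup>* O (rstep R)\<^sup>*)"
    unfolding relstep_def using assms(2) by blast
  then show "relstep Q R \<subseteq> relstep P R"
    unfolding relstep_def by simp
qed

lemma variant_of_rstep:
  assumes "variant_of R (l, r)"
  shows "(subst_apply l \<sigma>, subst_apply r \<sigma>) \<in> rstep R"
proof -
  from assms obtain l0 r0 \<pi> where "(l0, r0) \<in> R"
    and "l = subst_apply l0 (Var \<circ> \<pi>)" "r = subst_apply r0 (Var \<circ> \<pi>)"
    unfolding variant_of_def is_variant_def by auto
  then show ?thesis using rstep_rule_instance[of l0 r0 R "(Var \<circ> \<pi>) \<circ>\<^sub>s \<sigma>"] by simp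
qed

lemma foldr_replace_at_parallel:
  assumes "\<forall>p \<in> set ps. parallel_pos p q" and "is_pos t q"
  shows "is_pos (foldr (\<lambda>p v. replace_at v p (g p)) ps t) q \<and>
    subt_at (foldr (\<lambda>p v. replace_at v p (g p)) ps t) q = subt_at t q"
  using assms by (induct ps) (simp_all add: parallel_pos_replace_at)

lemma rsteps_foldr_replace_at:
  assumes "distinct ps" and "pairwise parallel_pos (set ps)"
    and "\<And>p. p \<in> set ps \<Longrightarrow> is_pos t p \<and> (subt_at t p, g p) \<in> rstep R"
  shows "(t, foldr (\<lambda>p v. replace_at v p (g p)) ps t) \<in> (rstep R)\<^sup>*"
  using assms
proof (induct ps)
  case (Cons p ps)
  let ?t = "foldr (\<lambda>p v. replace_at v p (g p)) ps t"
  have "(t, ?t) \<in> (rstep R)\<^sup>*"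
    using Cons by (simp add: pairwise_insert)
  moreover have "\<forall>p' \<in> set ps. parallel_pos p' p"
    using Cons.prems(1,2) by (auto simp: pairwise_def)
  then have "is_pos ?t p \<and> subt_at ?t p = subt_at t p"
    using Cons.prems(3) by (intro foldr_replace_at_parallel) auto
  then have "(?t, replace_at ?t p (g p)) \<in> rstep R"
    using Cons.prems(3) by (intro rstep_replace_at) auto
  ultimately show ?case by simp
qed simp

section \<open>Critical peaks and parallel critical peaks\<close>

lemma critical_peak_imp_parallel_critical_peak:
  assumes "critical_peak R t s u"
  shows "parallel_critical_peak R t s u"
proof -
  from assms obtain l1 r1 l2 r2 p \<sigma> where c:
      "variant_of R (l1, r1)" "variant_of R (l2, r2)"
      "vars_rule (l1, r1) \<inter> vars_rule (l2, r2) = {}"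
      "p \<in> fun_poss l2" "is_mgu \<sigma> {(l1, subt_at l2 p)}"
      "p = [] \<longrightarrow> \<not> is_variant (l1, r1) (l2, r2)"
      "s = subst_apply l2 \<sigma>"
      "t = replace_at (subst_apply l2 \<sigma>) p (subst_apply r1 \<sigma>)"
      "u = subst_apply r2 \<sigma>"
    unfolding critical_peak_def by blast
  have "{(fst ((\<lambda>_. (l1, r1)) q), subt_at l2 q) | q. q \<in> {p}} = {(l1, subt_at l2 p)}"
    by auto
  with c show ?thesis
    unfolding parallel_critical_peak_def
    by (intro exI[of _ l2] exI[of _ r2] exI[of _ "{p}"] exI[of _ "\<lambda>_. (l1, r1)"]
        exI[of _ \<sigma>] exI[of _ "[p]"]) auto
qed

lemma CPS_subset_PCPS: "CPS R \<subseteq> PCPS R"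
  unfolding CPS_def PCPS_def using critical_peak_imp_parallel_critical_peak by blast

lemma overlap_instance_rstep_CPS:
  assumes rules: "variant_of R (l1, r1)" "variant_of R (l2, r2)"
    and disjoint: "vars_rule (l1, r1) \<inter> vars_rule (l2, r2) = {}"
    and p: "p \<in> fun_poss l2"
    and unif: "subst_apply l1 \<sigma> = subst_apply (subt_at l2 p) \<sigma>"
    and root: "p = [] \<longrightarrow> \<not> is_variant (l1, r1) (l2, r2)"
  shows "(subst_apply l2 \<sigma>, replace_at (subst_apply l2 \<sigma>) p (subst_apply r1 \<sigma>)) \<in> rstep (CPS R)"
    and "(subst_apply l2 \<sigma>, subst_apply r2 \<sigma>) \<in> rstep (CPS R)"
proof -
  obtain \<mu> where mgu: "is_mgu \<mu> {(l1, subt_at l2 p)}"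
    using unifier_imp_mgu[of \<sigma> l1 "subt_at l2 p"] unif by auto
  then obtain \<delta> where \<sigma>: "\<sigma> = \<mu> \<circ>\<^sub>s \<delta>"
    using unif by (auto simp: is_mgu_iff)
  have "critical_peak R (replace_at (subst_apply l2 \<mu>) p (subst_apply r1 \<mu>))
      (subst_apply l2 \<mu>) (subst_apply r2 \<mu>)"
    unfolding critical_peak_def using rules disjoint p mgu root by blast
  then have cps: "(subst_apply l2 \<mu>, replace_at (subst_apply l2 \<mu>) p (subst_apply r1 \<mu>)) \<in> CPS R"
    "(subst_apply l2 \<mu>, subst_apply r2 \<mu>) \<in> CPS R"
    unfolding CPS_def by blast+
  have "is_pos (subst_apply l2 \<mu>) p"
    using p by (simp add: fun_poss_def is_pos_subst_apply)
  then show "(subst_apply l2 \<sigma>, replace_at (subst_apply l2 \<sigma>) p (subst_apply r1 \<sigma>)) \<in> rstep (CPS R)"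
    using rstep_rule_instance[OF cps(1), of \<delta>] by (simp add: \<sigma> subst_apply_replace_at)
  show "(subst_apply l2 \<sigma>, subst_apply r2 \<sigma>) \<in> rstep (CPS R)"
    using rstep_rule_instance[OF cps(2), of \<delta>] by (simp add: \<sigma>)
qed

lemma parallel_critical_peak_rstep_CPS:
  assumes "parallel_critical_peak R t s u"
  shows "(s, t) \<in> rstep (CPS R) O (rstep R)\<^sup>*" and "(s, u) \<in> rstep (CPS R)"
proof -
  from assms obtain l r P rl \<sigma> ps where
      rule: "variant_of R (l, r)" and rules: "\<forall>p \<in> P. variant_of R (rl p)"
      and disjoint: "\<forall>p \<in> P. vars_rule (rl p) \<inter> vars_rule (l, r) = {}"
      and "P \<noteq> {}" and fun_poss: "P \<subseteq> fun_poss l"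
      and "\<forall>p \<in> P. \<forall>q \<in> P. p \<noteq> q \<longrightarrow> parallel_pos p q"
      and mgu: "is_mgu \<sigma> {(fst (rl p), subt_at l p) | p. p \<in> P}"
      and root: "P = {[]} \<longrightarrow> \<not> is_variant (rl []) (l, r)"
      and ps: "set ps = P" "distinct ps"
      and s: "s = subst_apply l \<sigma>"
      and t: "t = foldr (\<lambda>p v. replace_at v p (subst_apply (snd (rl p)) \<sigma>)) ps (subst_apply l \<sigma>)"
      and u: "u = subst_apply r \<sigma>"
    unfolding parallel_critical_peak_def by (elim exE conjE) (rule that; assumption)
  then have par: "pairwise parallel_pos P" and "ps \<noteq> []"
    by (auto simp: pairwise_def)
  obtain qs p where ps_snoc: "ps = qs @ [p]"
    using \<open>ps \<noteq> []\<close> by (metis rev_exhaust)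
  obtain lp rp where rl_p: "rl p = (lp, rp)" by fastforce
  have p: "p \<in> P" and qs: "set qs \<subseteq> P" "p \<notin> set qs" "distinct qs"
    using ps ps_snoc by auto
  have pos: "is_pos l q" if "q \<in> P" for q
    using fun_poss that by (auto simp: fun_poss_def)
  have unif: "subst_apply (fst (rl q)) \<sigma> = subst_apply (subt_at l q) \<sigma>" if "q \<in> P" for q
    using mgu that unfolding is_mgu_def is_unifier_def by blast
  have "P = {[]}" if "p = []"
    using par p that by (auto simp: pairwise_def parallel_pos_def) (metis append_Nil)
  then have "p = [] \<longrightarrow> \<not> is_variant (lp, rp) (l, r)"
    using root rl_p by auto
  moreover have "variant_of R (lp, rp)" and "vars_rule (lp, rp) \<inter> vars_rule (l, r) = {}"
    using rules disjoint p unfolding rl_p[symmetric] by auto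
  moreover have "p \<in> fun_poss l" using fun_poss p by blast
  moreover have "subst_apply lp \<sigma> = subst_apply (subt_at l p) \<sigma>"
    using unif[OF p] rl_p by simp
  ultimately have overlap:
    "(subst_apply l \<sigma>, replace_at (subst_apply l \<sigma>) p (subst_apply rp \<sigma>)) \<in> rstep (CPS R)"
    "(subst_apply l \<sigma>, subst_apply r \<sigma>) \<in> rstep (CPS R)"
    using overlap_instance_rstep_CPS[OF _ rule] by simp_all
  show "(s, u) \<in> rstep (CPS R)"
    unfolding s u by (fact overlap(2))
  define w where "w = replace_at (subst_apply l \<sigma>) p (subst_apply rp \<sigma>)"
  have "(s, w) \<in> rstep (CPS R)"
    unfolding s w_def by (fact overlap(1))
  moreover have "(w, t) \<in> (rstep R)\<^sup>*"
  proof -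
    have "t = foldr (\<lambda>q v. replace_at v q (subst_apply (snd (rl q)) \<sigma>)) qs w"
      using t rl_p by (simp add: ps_snoc w_def)
    moreover have "is_pos w q \<and> (subt_at w q, subst_apply (snd (rl q)) \<sigma>) \<in> rstep R"
      if "q \<in> set qs" for q
    proof -
      have "q \<in> P" and "p \<noteq> q"
        using that qs by auto
      with p par have "parallel_pos p q"
        by (simp add: pairwise_def)
      have "is_pos (subst_apply l \<sigma>) q"
        using pos[OF \<open>q \<in> P\<close>] by (rule is_pos_subst_apply)
      then have "is_pos w q \<and> subt_at w q = subt_at (subst_apply l \<sigma>) q"
        unfolding w_def by (rule parallel_pos_replace_at[OF \<open>parallel_pos p q\<close>])
      then have "is_pos w q" and "subt_at w q = subst_apply (fst (rl q)) \<sigma>"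
        using unif[OF \<open>q \<in> P\<close>] pos[OF \<open>q \<in> P\<close>] by (simp_all add: subt_at_subst_apply)
      then show ?thesis
        using variant_of_rstep[of R "fst (rl q)" "snd (rl q)"] rules \<open>q \<in> P\<close> by simp
    qed
    ultimately show ?thesis
      using rsteps_foldr_replace_at[OF qs(3) pairwise_subset[OF par qs(1)],
          of w "\<lambda>q. subst_apply (snd (rl q)) \<sigma>"]
      by simp
  qed
  ultimately show "(s, t) \<in> rstep (CPS R) O (rstep R)\<^sup>*" by blast
qed

lemma PCPS_subset_CPS_rsteps: "(s, t) \<in> PCPS R \<Longrightarrow> (s, t) \<in> rstep (CPS R) O (rstep R)\<^sup>*"
  unfolding PCPS_def using parallel_critical_peak_rstep_CPS by blast

theorem mainTheorem9:
  fixes R :: "('f, 'v) trs"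
  assumes "infinite (UNIV :: 'v set)"
    and "wf_trs R"
  shows "relstep (CPS R) R = relstep (PCPS R) R \<and>
         (rel_terminating (CPS R) R \<longleftrightarrow> rel_terminating (PCPS R) R)"
proof -
  have "relstep (CPS R) R = relstep (PCPS R) R"
  proof (rule relstep_eqI)
    show "rstep (CPS R) \<subseteq> rstep (PCPS R)"
      by (rule rstep_mono[OF CPS_subset_PCPS])
    show "rstep (PCPS R) \<subseteq> rstep (CPS R) O (rstep R)\<^sup>*"
      by (rule rstep_subset_rstep_O_rsteps[OF PCPS_subset_CPS_rsteps])
  qed
  then show ?thesis unfolding rel_terminating_def by simp
qed

end
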